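(* Let $G$ be a graph with a single vertex and a single face cellularly embedded in a closed oriented surface $S$ of genus $g\ge2$, let $\omega,\eta$ be the co-boundaries defined in the context, and let $\alpha$ be a potential from which $\omega$ derives. Then for every closed walk $c$ in $\widetilde G$, \[A(c)=\sum_{e=xy\in c}\frac{\alpha(x)+\alpha(y)}{2}\,\eta(p(e)),\] where the sum runs over the successive arcs $e$ of $c$, with $x$ and $y$ the tail and head of $e$.
   Context: $G$ has one vertex and $2g$ loop edges; $\overset{\leftrightarrow}{L}$ is its set of arcs (two opposite arcs $e,\bar e$ per edge). $p:\widetilde S\to S$ is the universal covering and $\widetilde G=p^{-1}(G)$, whose faces tile the plane $\widetilde S$; $\widetilde V=p^{-1}(\text{vertex})$. A co-boundary is a map $\omega:\overset{\leftrightarrow}{L}\to\mathbb R$ with $\omega(\bar e)=-\omega(e)$. A co-boundary $\omega$ derives from a potential $\alpha:\widetilde V\to\mathbb R$ if $\omega(p(v_1v_2))=\alpha(v_2)-\alpha(v_1)$ for every arc $v_1v_2$ of $\widetilde G$. Fix a face $D$ of $\widetilde G$ with counterclockwise boundary arcs $(e_1,\dots,e_{4g})$ (identified with their projections); there exist indices $1\le i<j<k<l\le 4g$ with $e_k=\bar e_i$ and $e_l=\bar e_j$. Set $\omega(e_i)=-\omega(e_k)=1$ and $\omega=0$ on all other arcs, and $\eta(e_j)=-\eta(e_l)=1$ and $\eta=0$ on all other arcs. For a closed walk $c$ in $\widetilde G$, $A(c)=\sum_f\mathrm{wind}(c,f)$, summing over faces $f$ of $\widetilde G$ the winding number of $c$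 around an interior point of $f$ (signed area). *)

theory Defs
  imports Main "HOL.Real"
begin

text \<open>Arcs of the one-vertex graph G with 2g loop edges are the
nonzero integers a with |a| \<le> 2g; the reverse of arc a is -a.
The single face is given by its counterclockwise boundary word r (0-indexed).\<close>

definition arcs :: "nat \<Rightarrow> int set" where
  "arcs g = {a. a \<noteq> 0 \<and> \<bar>a\<bar> \<le> int (2 * g)}"

text \<open>Gluing the 4g-gon along r: side m runs from corner m to corner (m+1) mod n;
if r!k is the reverse of r!m, corner m is glued to corner (k+1) mod n.\<close>
definition corner_rel :: "int list \<Rightarrow> (nat \<times> nat) set" where
  "corner_rel r = {(m, Suc k mod length r) | m k.
      m < length r \<and> k < length r \<and> r ! k = - (r ! m)}"

definition one_vertex_one_face :: "nat \<Rightarrow> int list \<Rightarrow> bool" where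
  "one_vertex_one_face g r \<longleftrightarrow>
     length r = 4 * g \<and> distinct r \<and> set r = arcs g \<and>
     (\<forall>m < length r. (0, m) \<in> (corner_rel r \<union> (corner_rel r)\<inverse>)\<^sup>*)"

text \<open>Vertices of the universal cover = elements of the fundamental group
< arcs | a(-a) = 1, r = 1 >, represented as classes of words.\<close>
definition word_step :: "nat \<Rightarrow> int list \<Rightarrow> (int list \<times> int list) set" where
  "word_step g r =
     {(xs @ [a, - a] @ ys, xs @ ys) | xs ys a. xs \<in> lists (arcs g) \<and> ys \<in> lists (arcs g) \<and> a \<in> arcs g}
   \<union> {(xs @ r @ ys, xs @ ys) | xs ys. xs \<in> lists (arcs g) \<and> ys \<in> lists (arcs g)}"

definition word_eq :: "nat \<Rightarrow> int list \<Rightarrow> (int list \<times> int list) set" where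
  "word_eq g r = (word_step g r \<union> (word_step g r)\<inverse>)\<^sup>*"

definition vtx :: "nat \<Rightarrow> int list \<Rightarrow> int list \<Rightarrow> int list set" where
  "vtx g r w = word_eq g r `` {w}"

definition cover_vertices :: "nat \<Rightarrow> int list \<Rightarrow> int list set set" where
  "cover_vertices g r = vtx g r ` lists (arcs g)"

definition inv_word :: "int list \<Rightarrow> int list" where
  "inv_word w = rev (map uminus w)"

text \<open>omega derives from the potential alpha: omega(p(v1 v2)) = alpha v2 - alpha v1.
The arc of the cover from vertex [w] labelled a goes to [w @ [a]].\<close>
definition derives_from :: "nat \<Rightarrow> int list \<Rightarrow> (int \<Rightarrow> real) \<Rightarrow> (int list set \<Rightarrow> real) \<Rightarrow> bool" where
  "derives_from g r \<omega> \<alpha> \<longleftrightarrow>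
     (\<forall>w \<in> lists (arcs g). \<forall>a \<in> arcs g. \<omega> a = \<alpha> (vtx g r (w @ [a])) - \<alpha> (vtx g r w))"

definition cob :: "int list \<Rightarrow> nat \<Rightarrow> nat \<Rightarrow> int \<Rightarrow> real" where
  "cob r i k a = (if a = r ! i then 1 else if a = r ! k then -1 else 0)"

text \<open>A walk in the cover: starts at vertex [w0] and follows the arc labels es.\<close>
definition traversals :: "nat \<Rightarrow> int list \<Rightarrow> int list \<Rightarrow> int list \<Rightarrow> int list set \<Rightarrow> int \<Rightarrow> nat" where
  "traversals g r w0 es v a =
     card {m. m < length es \<and> vtx g r (w0 @ take m es) = v \<and> es ! m = a}"

text \<open>Faces of the cover are indexed by their base vertex h: the face whose
counterclockwise boundary is h, h r_0, h r_0 r_1, ... . The face to the left of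
the arc ([w], a) is the one where a occurs at its position m in r.\<close>
definition left_face :: "nat \<Rightarrow> int list \<Rightarrow> int list \<Rightarrow> int \<Rightarrow> int list set" where
  "left_face g r w a = vtx g r (w @ inv_word (take (THE m. m < length r \<and> r ! m = a) r))"

text \<open>F is a finitely supported 2-chain on the faces whose boundary is the walk
(as an oriented 1-chain); F f is then the winding number of the walk around f.\<close>
definition fills :: "nat \<Rightarrow> int list \<Rightarrow> int list \<Rightarrow> int list \<Rightarrow> (int list set \<Rightarrow> int) \<Rightarrow> bool" where
  "fills g r w0 es F \<longleftrightarrow>
     (\<forall>v. v \<notin> cover_vertices g r \<longrightarrow> F v = 0) \<and> finite {v. F v \<noteq> 0} \<and>
     (\<forall>w \<in> lists (arcs g). \<forall>a \<in> arcs g.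
        int (traversals g r w0 es (vtx g r w) a) - int (traversals g r w0 es (vtx g r (w @ [a])) (- a))
        = F (left_face g r w a) - F (left_face g r (w @ [a]) (- a)))"

text \<open>Signed area: sum over faces of the winding numbers.\<close>
definition area :: "nat \<Rightarrow> int list \<Rightarrow> int list \<Rightarrow> int list \<Rightarrow> real" where
  "area g r w0 es = (THE x. \<exists>F. fills g r w0 es F \<and> x = (\<Sum>v \<in> {v. F v \<noteq> 0}. real_of_int (F v)))"

definition closed_walk :: "nat \<Rightarrow> int list \<Rightarrow> int list \<Rightarrow> int list \<Rightarrow> bool" where
  "closed_walk g r w0 es \<longleftrightarrow>
     w0 \<in> lists (arcs g) \<and> es \<in> lists (arcs g) \<and> vtx g r (w0 @ es) = vtx g r w0"

end

theory Submission
  imports Defs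
begin

(*
  Both sides are additive along walks, and a closed walk reduces to the empty word by the two
  moves of the group presentation.  Cancelling a backtrack a(-a) changes neither the traversal
  counts of any edge nor the right-hand side (eta is odd and the backtrack returns to its start).
  Inserting the face word r at a vertex u adds the face based at u to a filling 2-chain and adds
  exactly 1 to the right-hand side: along r the potential alpha jumps by +1 at position i and by
  -1 at position k, so its average on the side r_j exceeds that on the side r_l by one.  This
  yields a filling 2-chain of the closed walk whose total weight is the right-hand side.
  The filling is unique: the difference of two fillings has no boundary, so it takes the same
  value on any two faces sharing a side labelled r_j.  Stepping across that side raises alpha at
  the base vertex by 1, so the faces reached by repeated steps are pairwise distinct, and a
  finitely supported function constant along them vanishes.
*)

section \<open>Word equivalence and vertices of the cover\<close>

lemma arcs_uminus: "a \<in> arcs g \<Longrightarrow> - a \<in> arcs g"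
  unfolding arcs_def by auto

lemma arcs_nonzero: "a \<in> arcs g \<Longrightarrow> a \<noteq> 0"
  unfolding arcs_def by auto

lemma inv_word_Cons: "inv_word (a # q) = inv_word q @ [- a]"
  unfolding inv_word_def by simp

lemma inv_word_inv_word [simp]: "inv_word (inv_word q) = q"
  unfolding inv_word_def by (simp add: rev_map comp_def)

lemma inv_word_in_lists: "q \<in> lists (arcs g) \<Longrightarrow> inv_word q \<in> lists (arcs g)"
  unfolding inv_word_def using arcs_uminus by auto

lemma sum_list_map_inv_word:
  fixes f :: "int \<Rightarrow> 'a::ab_group_add"
  assumes "\<And>a. f (- a) = - f a"
  shows "sum_list (map f (inv_word q)) = - sum_list (map f q)"
  by (induction q) (simp_all add: inv_word_Cons assms inv_word_def)

lemma word_step_append: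
  "(x, y) \<in> word_step g r \<Longrightarrow> z \<in> lists (arcs g) \<Longrightarrow> (x @ z, y @ z) \<in> word_step g r"
  unfolding word_step_def
  apply (elim UnE CollectE exE conjE)
   apply (rule UnI1, simp, metis append.assoc append_in_lists_conv)
  apply (rule UnI2, simp, metis append.assoc append_in_lists_conv)
  done

lemma word_step_prepend:
  "(x, y) \<in> word_step g r \<Longrightarrow> z \<in> lists (arcs g) \<Longrightarrow> (z @ x, z @ y) \<in> word_step g r"
  unfolding word_step_def
  apply (elim UnE CollectE exE conjE)
   apply (rule UnI1, simp, metis append.assoc append_in_lists_conv)
  apply (rule UnI2, simp, metis append.assoc append_in_lists_conv)
  done

lemma word_eq_refl [simp]: "(x, x) \<in> word_eq g r"
  unfolding word_eq_def by simp

lemma word_eq_sym: "(x, y) \<in> word_eq g r \<Longrightarrow> (y, x) \<in> word_eq g r"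
  unfolding word_eq_def
  by (metis converse_Un converse_converse converse_iff rtrancl_converseI sup_commute)

lemma word_eq_trans: "(x, y) \<in> word_eq g r \<Longrightarrow> (y, z) \<in> word_eq g r \<Longrightarrow> (x, z) \<in> word_eq g r"
  unfolding word_eq_def by (rule rtrancl_trans)

lemma word_eq_of_step: "(x, y) \<in> word_step g r \<Longrightarrow> (x, y) \<in> word_eq g r"
  unfolding word_eq_def by blast

lemma word_eq_congruence:
  assumes "(x, y) \<in> word_eq g r" "z \<in> lists (arcs g)"
  shows word_eq_append: "(x @ z, y @ z) \<in> word_eq g r"
    and word_eq_prepend: "(z @ x, z @ y) \<in> word_eq g r"
proof -
  have "(x @ z, y @ z) \<in> word_eq g r \<and> (z @ x, z @ y) \<in> word_eq g r"
    using assms(1) unfolding word_eq_def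
  proof (induction rule: rtrancl_induct)
    case (step y w)
    then have "(y @ z, w @ z) \<in> word_step g r \<union> (word_step g r)\<inverse>"
      and "(z @ y, z @ w) \<in> word_step g r \<union> (word_step g r)\<inverse>"
      using word_step_append[OF _ assms(2)] word_step_prepend[OF _ assms(2)] by blast+
    with step.IH show ?case by (meson rtrancl.rtrancl_into_rtrancl)
  qed simp
  then show "(x @ z, y @ z) \<in> word_eq g r" "(z @ x, z @ y) \<in> word_eq g r" by blast+
qed

lemma word_eq_cancel: "u \<in> lists (arcs g) \<Longrightarrow> a \<in> arcs g \<Longrightarrow> (u @ [a, - a], u) \<in> word_eq g r"
  by (rule word_eq_of_step) (force simp: word_step_def)

lemma word_eq_relator: "u \<in> lists (arcs g) \<Longrightarrow> r \<in> lists (arcs g) \<Longrightarrow> (u @ r, u) \<in> word_eq g r"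
  by (rule word_eq_of_step) (force simp: word_step_def)

lemma word_eq_inv_right: "q \<in> lists (arcs g) \<Longrightarrow> (q @ inv_word q, []) \<in> word_eq g r"
proof (induction q)
  case Nil
  then show ?case by (simp add: inv_word_def)
next
  case (Cons a q)
  then have a: "a \<in> arcs g" and "q \<in> lists (arcs g)" by auto
  with Cons.IH have "([a] @ (q @ inv_word q) @ [- a], [a] @ [] @ [- a]) \<in> word_eq g r"
    by (intro word_eq_prepend word_eq_append) (auto simp: arcs_uminus)
  moreover have "([] @ [a, - a], []) \<in> word_eq g r"
    using a by (intro word_eq_cancel) simp_all
  ultimately show ?case by (auto simp: inv_word_Cons intro: word_eq_trans)
qed

lemma word_eq_inv_left: "q \<in> lists (arcs g) \<Longrightarrow> (inv_word q @ q, []) \<in> word_eq g r"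
  using word_eq_inv_right[OF inv_word_in_lists] by fastforce

lemma vtx_eq_iff: "vtx g r x = vtx g r y \<longleftrightarrow> (x, y) \<in> word_eq g r"
proof
  assume "vtx g r x = vtx g r y"
  then show "(x, y) \<in> word_eq g r"
    unfolding vtx_def by (metis Image_singleton_iff word_eq_refl)
next
  assume "(x, y) \<in> word_eq g r"
  then show "vtx g r x = vtx g r y"
    unfolding vtx_def by (blast intro: word_eq_trans word_eq_sym)
qed

lemma vtx_append_cong:
  "vtx g r x = vtx g r y \<Longrightarrow> z \<in> lists (arcs g) \<Longrightarrow> vtx g r (x @ z) = vtx g r (y @ z)"
  unfolding vtx_eq_iff by (rule word_eq_append)

lemma vtx_append_inv_word:
  assumes "p \<in> lists (arcs g)" "q \<in> lists (arcs g)"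
  shows "vtx g r (p @ q @ inv_word q) = vtx g r p" and "vtx g r (p @ inv_word q @ q) = vtx g r p"
proof -
  have "(p @ q @ inv_word q, p @ []) \<in> word_eq g r" "(p @ inv_word q @ q, p @ []) \<in> word_eq g r"
    by (rule word_eq_prepend[OF word_eq_inv_right[OF assms(2)] assms(1)],
        rule word_eq_prepend[OF word_eq_inv_left[OF assms(2)] assms(1)])
  then show "vtx g r (p @ q @ inv_word q) = vtx g r p" "vtx g r (p @ inv_word q @ q) = vtx g r p"
    unfolding vtx_eq_iff by simp_all
qed

lemma vtx_append_inv_word_iff:
  assumes "z \<in> lists (arcs g)" "u \<in> lists (arcs g)" "q \<in> lists (arcs g)"
  shows "vtx g r (z @ inv_word q) = vtx g r u \<longleftrightarrow> vtx g r (u @ q) = vtx g r z"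
proof
  assume "vtx g r (z @ inv_word q) = vtx g r u"
  from vtx_append_cong[OF this assms(3)]
  have "vtx g r (z @ inv_word q @ q) = vtx g r (u @ q)" by simp
  then show "vtx g r (u @ q) = vtx g r z"
    using vtx_append_inv_word(2)[OF assms(1,3)] by simp
next
  assume "vtx g r (u @ q) = vtx g r z"
  from vtx_append_cong[OF this inv_word_in_lists[OF assms(3)]]
  have "vtx g r (u @ q @ inv_word q) = vtx g r (z @ inv_word q)" by simp
  then show "vtx g r (z @ inv_word q) = vtx g r u"
    using vtx_append_inv_word(1)[OF assms(2,3)] by simp
qed

lemma vtx_snoc_eq_iff:
  assumes "p \<in> lists (arcs g)" "q \<in> lists (arcs g)" "a \<in> arcs g"
  shows "vtx g r (p @ [a]) = vtx g r (q @ [a]) \<longleftrightarrow> vtx g r p = vtx g r q"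
  using vtx_append_inv_word_iff[of "p @ [a]" g q "[a]" r] vtx_append_inv_word(1)[OF assms(1), of "[a]" r] assms
  by auto

lemma closed_walk_word_eq_Nil:
  assumes "closed_walk g r w0 es"
  shows "(es, []) \<in> word_eq g r"
proof -
  have w0: "w0 \<in> lists (arcs g)" and es: "es \<in> lists (arcs g)" and "(w0 @ es, w0) \<in> word_eq g r"
    using assms unfolding closed_walk_def vtx_eq_iff by auto
  then have "(inv_word w0 @ w0 @ es, inv_word w0 @ w0) \<in> word_eq g r"
    using word_eq_prepend inv_word_in_lists by blast
  moreover have "(inv_word w0 @ w0 @ es, es) \<in> word_eq g r"
    using word_eq_append[OF word_eq_inv_left[OF w0] es] by simp
  ultimately show ?thesis
    using word_eq_inv_left[OF w0] by (meson word_eq_sym word_eq_trans)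
qed

section \<open>Sums along walks and filling 2-chains\<close>

fun walk_sum ::
    "nat \<Rightarrow> int list \<Rightarrow> (int list set \<Rightarrow> int list set \<Rightarrow> int \<Rightarrow> 'b::comm_monoid_add)
      \<Rightarrow> int list \<Rightarrow> int list \<Rightarrow> 'b" where
  "walk_sum g r \<psi> w [] = 0"
| "walk_sum g r \<psi> w (e # es) = \<psi> (vtx g r w) (vtx g r (w @ [e])) e + walk_sum g r \<psi> (w @ [e]) es"

lemma walk_sum_append:
  "walk_sum g r \<psi> w (xs @ ys) = walk_sum g r \<psi> w xs + walk_sum g r \<psi> (w @ xs) ys"
  by (induction xs arbitrary: w) (auto simp: add.assoc)

lemma walk_sum_conv_sum:
  "walk_sum g r \<psi> w es =
     (\<Sum>m<length es. \<psi> (vtx g r (w @ take m es)) (vtx g r (w @ take (Suc m) es)) (es ! m))"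
  by (induction es arbitrary: w) (simp_all add: sum.lessThan_Suc_shift del: sum.lessThan_Suc)

lemma walk_sum_cong_start:
  "vtx g r w = vtx g r w' \<Longrightarrow> es \<in> lists (arcs g) \<Longrightarrow> walk_sum g r \<psi> w es = walk_sum g r \<psi> w' es"
proof (induction es arbitrary: w w')
  case (Cons e es)
  then have "vtx g r (w @ [e]) = vtx g r (w' @ [e])"
    using vtx_append_cong[of g r w w' "[e]"] by simp
  with Cons.IH[OF this] Cons.prems show ?case by simp
qed simp

lemma walk_sum_insert_loop:
  assumes "vtx g r (w @ xs @ M) = vtx g r (w @ xs)" "ys \<in> lists (arcs g)"
  shows "walk_sum g r \<psi> w (xs @ M @ ys) = walk_sum g r \<psi> w (xs @ ys) + walk_sum g r \<psi> (w @ xs) M"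
  using walk_sum_cong_start[of g r "w @ xs @ M" "w @ xs" ys \<psi>] assms
  by (simp add: walk_sum_append add_ac)

lemma traversals_conv_walk_sum:
  "int (traversals g r w es v a) = walk_sum g r (\<lambda>x _ e. if x = v \<and> e = a then 1 else 0) w es"
proof -
  let ?P = "\<lambda>m. vtx g r (w @ take m es) = v \<and> es ! m = a"
  have "int (traversals g r w es v a) = (\<Sum>m \<in> {m \<in> {..<length es}. ?P m}. 1)"
    unfolding traversals_def by simp
  also have "\<dots> = (\<Sum>m<length es. if ?P m then 1 else 0)"
    by (rule sum.inter_filter) simp
  finally show ?thesis
    unfolding walk_sum_conv_sum .
qed

definition flow :: "nat \<Rightarrow> int list \<Rightarrow> int list \<Rightarrow> int list \<Rightarrow> int list \<Rightarrow> int \<Rightarrow> int" where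
  "flow g r w0 es w a =
     int (traversals g r w0 es (vtx g r w) a) - int (traversals g r w0 es (vtx g r (w @ [a])) (- a))"

lemma flow_Nil [simp]: "flow g r w0 [] w a = 0"
  unfolding flow_def traversals_def by simp

lemma flow_insert_loop:
  assumes "vtx g r (w0 @ xs @ M) = vtx g r (w0 @ xs)" "ys \<in> lists (arcs g)"
  shows "flow g r w0 (xs @ M @ ys) w a = flow g r w0 (xs @ ys) w a + flow g r (w0 @ xs) M w a"
  unfolding flow_def traversals_conv_walk_sum walk_sum_insert_loop[OF assms] by simp

lemma flow_backtrack:
  assumes "u \<in> lists (arcs g)" "a \<in> arcs g" "w \<in> lists (arcs g)" "b \<in> arcs g"
  shows "flow g r u [a, - a] w b = 0"
proof -
  have "a \<noteq> - a"
    using arcs_nonzero[OF assms(2)] by simp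
  moreover have "vtx g r (u @ [a]) = vtx g r (w @ [a]) \<longleftrightarrow> vtx g r u = vtx g r w"
    using vtx_snoc_eq_iff assms by blast
  moreover have "vtx g r u = vtx g r (w @ [- a]) \<longleftrightarrow> vtx g r (u @ [a]) = vtx g r w"
    using vtx_append_inv_word_iff[of w g u "[a]" r] assms by (auto simp: inv_word_def)
  ultimately show ?thesis
    unfolding flow_def traversals_conv_walk_sum
    by (cases "b = a"; cases "b = - a") auto
qed

definition face_boundary :: "nat \<Rightarrow> int list \<Rightarrow> (int list set \<Rightarrow> int) \<Rightarrow> int list \<Rightarrow> int \<Rightarrow> int" where
  "face_boundary g r F w a = F (left_face g r w a) - F (left_face g r (w @ [a]) (- a))"

definition finite_chain :: "nat \<Rightarrow> int list \<Rightarrow> (int list set \<Rightarrow> int) \<Rightarrow> bool" where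
  "finite_chain g r F \<longleftrightarrow> (\<forall>v. v \<notin> cover_vertices g r \<longrightarrow> F v = 0) \<and> finite {v. F v \<noteq> 0}"

definition fills_between ::
    "nat \<Rightarrow> int list \<Rightarrow> int list \<Rightarrow> int list \<Rightarrow> int list \<Rightarrow> (int list set \<Rightarrow> int) \<Rightarrow> bool" where
  "fills_between g r w0 x y F \<longleftrightarrow> finite_chain g r F \<and>
     (\<forall>w \<in> lists (arcs g). \<forall>a \<in> arcs g. flow g r w0 x w a - flow g r w0 y w a = face_boundary g r F w a)"

lemma fills_iff_fills_between_Nil: "fills g r w0 es F \<longleftrightarrow> fills_between g r w0 es [] F"
  by (simp add: fills_def fills_between_def finite_chain_def flow_def face_boundary_def traversals_def)

lemma fills_between_refl: "fills_between g r w0 x x (\<lambda>_. 0)"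
  unfolding fills_between_def finite_chain_def face_boundary_def by simp

lemma fills_between_sym: "fills_between g r w0 x y F \<Longrightarrow> fills_between g r w0 y x (\<lambda>v. - F v)"
  unfolding fills_between_def finite_chain_def face_boundary_def by (simp add: algebra_simps)

lemma fills_between_trans:
  assumes "fills_between g r w0 x y F1" "fills_between g r w0 y z F2"
  shows "fills_between g r w0 x z (\<lambda>v. F1 v + F2 v)"
  unfolding fills_between_def
proof (intro conjI ballI)
  show "finite_chain g r (\<lambda>v. F1 v + F2 v)"
    using assms unfolding fills_between_def finite_chain_def
    by (auto intro: finite_subset[of _ "{v. F1 v \<noteq> 0} \<union> {v. F2 v \<noteq> 0}"])
next
  fix w a assume "w \<in> lists (arcs g)" "a \<in> arcs g"
  then have "flow g r w0 x w a - flow g r w0 y w a = face_boundary g r F1 w a"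
    and "flow g r w0 y w a - flow g r w0 z w a = face_boundary g r F2 w a"
    using assms unfolding fills_between_def by blast+
  then show "flow g r w0 x w a - flow g r w0 z w a = face_boundary g r (\<lambda>v. F1 v + F2 v) w a"
    unfolding face_boundary_def by linarith
qed

lemma fills_between_insert_loop:
  assumes "vtx g r (w0 @ xs @ M) = vtx g r (w0 @ xs)" "ys \<in> lists (arcs g)"
    and "fills_between g r (w0 @ xs) M [] F"
  shows "fills_between g r w0 (xs @ M @ ys) (xs @ ys) F"
  using assms(3) unfolding fills_between_def flow_insert_loop[OF assms(1,2)] by simp

lemma fills_between_backtrack:
  "u \<in> lists (arcs g) \<Longrightarrow> a \<in> arcs g \<Longrightarrow> fills_between g r u [a, - a] [] (\<lambda>_. 0)"
  unfolding fills_between_def finite_chain_def face_boundary_def by (simp add: flow_backtrack)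

definition chain_sum :: "(int list set \<Rightarrow> int) \<Rightarrow> real" where
  "chain_sum F = (\<Sum>v \<in> {v. F v \<noteq> 0}. real_of_int (F v))"

lemma chain_sum_zero [simp]: "chain_sum (\<lambda>_. 0) = 0"
  unfolding chain_sum_def by simp

lemma chain_sum_uminus: "chain_sum (\<lambda>v. - F v) = - chain_sum F"
  unfolding chain_sum_def by (simp add: sum_negf)

lemma chain_sum_add:
  assumes "finite {v. F1 v \<noteq> 0}" "finite {v. F2 v \<noteq> 0}"
  shows "chain_sum (\<lambda>v. F1 v + F2 v) = chain_sum F1 + chain_sum F2"
proof -
  let ?S = "{v. F1 v \<noteq> 0} \<union> {v. F2 v \<noteq> 0}"
  have on_S: "chain_sum F = (\<Sum>v \<in> ?S. real_of_int (F v))" if "{v. F v \<noteq> 0} \<subseteq> ?S" for F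
    unfolding chain_sum_def using assms that by (intro sum.mono_neutral_left) auto
  have "chain_sum (\<lambda>v. F1 v + F2 v) = (\<Sum>v \<in> ?S. real_of_int (F1 v + F2 v))"
    by (rule on_S) auto
  also have "\<dots> = (\<Sum>v \<in> ?S. real_of_int (F1 v)) + (\<Sum>v \<in> ?S. real_of_int (F2 v))"
    by (simp add: sum.distrib)
  also have "\<dots> = chain_sum F1 + chain_sum F2"
    using on_S[of F1] on_S[of F2] by auto
  finally show ?thesis .
qed

definition trapezoid_sum ::
    "nat \<Rightarrow> int list \<Rightarrow> (int list set \<Rightarrow> real) \<Rightarrow> (int \<Rightarrow> real) \<Rightarrow> int list \<Rightarrow> int list \<Rightarrow> real" where
  "trapezoid_sum g r \<alpha> \<eta> = walk_sum g r (\<lambda>x y e. (\<alpha> x + \<alpha> y) / 2 * \<eta> e)"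

lemma trapezoid_sum_backtrack:
  assumes "\<And>a. \<eta> (- a) = - \<eta> a" "u \<in> lists (arcs g)" "a \<in> arcs g"
  shows "trapezoid_sum g r \<alpha> \<eta> u [a, - a] = 0"
proof -
  have "vtx g r (u @ [a, - a]) = vtx g r u"
    using word_eq_cancel[OF assms(2,3)] vtx_eq_iff by blast
  then show ?thesis
    unfolding trapezoid_sum_def by (simp add: assms(1) field_simps)
qed

lemma trapezoid_sum_insert_loop:
  "vtx g r (w0 @ xs @ M) = vtx g r (w0 @ xs) \<Longrightarrow> ys \<in> lists (arcs g) \<Longrightarrow>
   trapezoid_sum g r \<alpha> \<eta> w0 (xs @ M @ ys) = trapezoid_sum g r \<alpha> \<eta> w0 (xs @ ys) + trapezoid_sum g r \<alpha> \<eta> (w0 @ xs) M"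
  unfolding trapezoid_sum_def by (rule walk_sum_insert_loop)

section \<open>Potentials\<close>

lemma potential_along_walk:
  assumes "derives_from g r \<omega> \<alpha>" "w \<in> lists (arcs g)" "z \<in> lists (arcs g)"
  shows "\<alpha> (vtx g r (w @ z)) = \<alpha> (vtx g r w) + sum_list (map \<omega> z)"
  using assms(3)
proof (induction z rule: rev_induct)
  case (snoc a z)
  then have "w @ z \<in> lists (arcs g)" "a \<in> arcs g"
    using assms(2) by auto
  then have "\<omega> a = \<alpha> (vtx g r ((w @ z) @ [a])) - \<alpha> (vtx g r (w @ z))"
    using assms(1) unfolding derives_from_def by blast
  with snoc show ?case by simp
qed simp

lemma translation_invariant_finite_support_zero:
  fixes \<alpha> :: "int list set \<Rightarrow> real"
  assumes "finite {v. G v \<noteq> 0}" "c \<in> lists (arcs g)" "h \<in> lists (arcs g)"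
    and "\<And>p. p \<in> lists (arcs g) \<Longrightarrow> G (vtx g r (p @ c)) = G (vtx g r p)"
    and "\<And>p. p \<in> lists (arcs g) \<Longrightarrow> \<alpha> (vtx g r (p @ c)) = \<alpha> (vtx g r p) + 1"
  shows "G (vtx g r h) = 0"
proof (rule ccontr)
  assume nonzero: "G (vtx g r h) \<noteq> 0"
  define orbit where "orbit n = vtx g r (((\<lambda>p. p @ c) ^^ n) h)" for n
  have in_lists: "((\<lambda>p. p @ c) ^^ n) h \<in> lists (arcs g)" for n
    by (induction n) (simp_all add: assms(2,3))
  have "G (orbit n) = G (vtx g r h) \<and> \<alpha> (orbit n) = \<alpha> (vtx g r h) + real n" for n
    unfolding orbit_def by (induction n) (simp_all add: assms(4,5) in_lists)
  then have "inj orbit" and "range orbit \<subseteq> {v. G v \<noteq> 0}"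
    using nonzero by (auto intro!: injI) (metis add_left_cancel of_nat_eq_iff)
  then show False
    using assms(1) by (meson finite_imageD finite_subset infinite_UNIV_nat)
qed

section \<open>The face word\<close>

locale boundary_word =
  fixes g :: nat and r :: "int list"
  assumes distinct_r: "distinct r" and set_r: "set r = arcs g"
begin

lemma r_in_lists: "r \<in> lists (arcs g)"
  using set_r by auto

lemma take_r_in_lists: "take m r \<in> lists (arcs g)"
  using r_in_lists by (meson in_lists_conv_set in_set_takeD)

lemma nth_r_in_arcs: "m < length r \<Longrightarrow> r ! m \<in> arcs g"
  using set_r nth_mem by blast

lemma nth_r_eq_iff: "m < length r \<Longrightarrow> m' < length r \<Longrightarrow> r ! m = r ! m' \<longleftrightarrow> m = m'"
  using distinct_r by (simp add: nth_eq_iff_index_eq)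

lemma left_face_nth: "m < length r \<Longrightarrow> left_face g r w (r ! m) = vtx g r (w @ inv_word (take m r))"
  unfolding left_face_def by (subst the_equality[of _ m]) (auto simp: nth_r_eq_iff)

lemma cob_nth:
  "m < length r \<Longrightarrow> p < length r \<Longrightarrow> q < length r \<Longrightarrow> p \<noteq> q \<Longrightarrow>
   cob r p q (r ! m) = (if m = p then 1 else if m = q then -1 else 0)"
  unfolding cob_def using nth_r_eq_iff by auto

lemma cob_uminus:
  assumes "r ! q = - (r ! p)" "p < length r"
  shows "cob r p q (- a) = - cob r p q a"
proof -
  have "r ! p \<noteq> 0"
    using arcs_nonzero[OF nth_r_in_arcs[OF assms(2)]] .
  then show ?thesis
    unfolding cob_def using assms(1) by auto
qed

lemma traversals_face:
  assumes "u \<in> lists (arcs g)" "z \<in> lists (arcs g)" "c \<in> arcs g"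
  shows "int (traversals g r u r (vtx g r z) c) = of_bool (left_face g r z c = vtx g r u)"
proof -
  obtain m where m: "m < length r" "r ! m = c"
    using set_r assms(3) by (metis in_set_conv_nth)
  then have "{n. n < length r \<and> vtx g r (u @ take n r) = vtx g r z \<and> r ! n = c}
      = (if vtx g r (u @ take m r) = vtx g r z then {m} else {})"
    using nth_r_eq_iff by auto
  then have "int (traversals g r u r (vtx g r z) c) = of_bool (vtx g r (u @ take m r) = vtx g r z)"
    unfolding traversals_def by simp
  also have "\<dots> = of_bool (left_face g r z c = vtx g r u)"
    using left_face_nth[OF m(1), of z] m(2) vtx_append_inv_word_iff[OF assms(2,1) take_r_in_lists]
    by simp
  finally show ?thesis .
qed

lemma fills_between_face:
  assumes "u \<in> lists (arcs g)"
  shows "fills_between g r u r [] (\<lambda>v. of_bool (v = vtx g r u))"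
  unfolding fills_between_def finite_chain_def
proof (intro conjI allI impI ballI)
  show "of_bool (v = vtx g r u) = 0" if "v \<notin> cover_vertices g r" for v
    using that assms unfolding cover_vertices_def by auto
next
  fix w a assume "w \<in> lists (arcs g)" "a \<in> arcs g"
  then show "flow g r u r w a - flow g r u [] w a = face_boundary g r (\<lambda>v. of_bool (v = vtx g r u)) w a"
    unfolding flow_Nil diff_0_right unfolding flow_def face_boundary_def
    using traversals_face[OF assms] by (simp add: arcs_uminus)
qed simp

lemma face_boundary_glued_sides:
  assumes "m < length r" "n < length r" "r ! n = - (r ! m)" "p \<in> lists (arcs g)"
  shows "face_boundary g r G (p @ take m r) (r ! m)
    = G (vtx g r p) - G (vtx g r (p @ take (Suc m) r @ inv_word (take n r)))"
proof -
  have "left_face g r (p @ take m r) (r ! m) = vtx g r p"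
    using left_face_nth[OF assms(1)] vtx_append_inv_word(1)[OF assms(4) take_r_in_lists] by simp
  moreover have "left_face g r ((p @ take m r) @ [r ! m]) (- (r ! m))
      = vtx g r (p @ take (Suc m) r @ inv_word (take n r))"
    using left_face_nth[OF assms(2)] assms(1,3) by (simp add: take_Suc_conv_app_nth)
  ultimately show ?thesis
    unfolding face_boundary_def by simp
qed

end

locale interlaced_cobounds = boundary_word +
  fixes i j k l :: nat and \<alpha> :: "int list set \<Rightarrow> real"
  assumes i_j: "i < j" and j_k: "j < k" and k_l: "k < l" and l_less: "l < length r"
    and r_k: "r ! k = - (r ! i)" and r_l: "r ! l = - (r ! j)"
    and potential: "derives_from g r (cob r i k) \<alpha>"
begin

abbreviation \<eta> :: "int \<Rightarrow> real" where
  "\<eta> \<equiv> cob r j l"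

lemma cob_prefix_sum:
  assumes "m \<le> length r"
  shows "sum_list (map (cob r i k) (take m r)) = of_bool (i < m) - of_bool (k < m)"
proof -
  have "sum_list (map (cob r i k) (take m r)) = (\<Sum>t<m. cob r i k (r ! t))"
    using assms by (simp add: sum_list_sum_nth atLeast0LessThan min_def)
  also have "\<dots> = (\<Sum>t<m. of_bool (t = i) - of_bool (t = k))"
    using assms i_j j_k k_l l_less by (intro sum.cong) (auto simp: cob_nth)
  also have "\<dots> = of_bool (i < m) - of_bool (k < m)"
    by (simp add: sum_subtractf)
  finally show ?thesis .
qed

lemma trapezoid_sum_face:
  assumes "u \<in> lists (arcs g)"
  shows "trapezoid_sum g r \<alpha> \<eta> u r = 1"
proof -
  define avg where "avg m = (\<alpha> (vtx g r (u @ take m r)) + \<alpha> (vtx g r (u @ take (Suc m) r))) / 2" for m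
  have "trapezoid_sum g r \<alpha> \<eta> u r = (\<Sum>m<length r. avg m * (of_bool (m = j) - of_bool (m = l)))"
    unfolding trapezoid_sum_def walk_sum_conv_sum avg_def
    using i_j j_k k_l l_less by (intro sum.cong) (auto simp: cob_nth take_Suc_conv_app_nth)
  also have "\<dots> = avg j - avg l"
    using j_k k_l l_less by (simp add: algebra_simps sum_subtractf if_distrib[of "\<lambda>x. _ * x"])
  also have "\<dots> = 1"
    unfolding avg_def potential_along_walk[OF potential assms take_r_in_lists]
    using i_j j_k k_l l_less by (simp add: cob_prefix_sum field_simps)
  finally show ?thesis .
qed

lemma \<eta>_uminus: "\<eta> (- a) = - \<eta> a"
  using cob_uminus[OF r_l] j_k k_l l_less by simp

lemma fills_unique:
  assumes "fills g r w0 es F1" "fills g r w0 es F2"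
  shows "F1 = F2"
proof
  fix v
  define G where "G v = F1 v - F2 v" for v
  have "finite {v. G v \<noteq> 0}"
    using assms unfolding fills_def G_def
    by (auto intro: finite_subset[of _ "{v. F1 v \<noteq> 0} \<union> {v. F2 v \<noteq> 0}"])
  have boundary_free: "face_boundary g r G w a = 0" if "w \<in> lists (arcs g)" "a \<in> arcs g" for w a
  proof -
    have "face_boundary g r F1 w a = face_boundary g r F2 w a"
      using assms that unfolding fills_iff_fills_between_Nil fills_between_def by auto
    then show ?thesis
      unfolding face_boundary_def G_def by simp
  qed
  \<comment> \<open>\<open>p @ c\<close> is the base of the face sharing the side \<open>r ! j\<close> of the face based at \<open>p\<close>\<close>
  define c where "c = take (Suc j) r @ inv_word (take l r)"
  have c: "c \<in> lists (arcs g)"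
    unfolding c_def by (simp add: take_r_in_lists inv_word_in_lists)
  have "G (vtx g r (p @ c)) = G (vtx g r p)" if "p \<in> lists (arcs g)" for p
    using face_boundary_glued_sides[OF _ l_less r_l that, of G] boundary_free[of "p @ take j r" "r ! j"]
      that j_k k_l l_less
    by (simp add: c_def take_r_in_lists nth_r_in_arcs)
  moreover have "\<alpha> (vtx g r (p @ c)) = \<alpha> (vtx g r p) + 1" if "p \<in> lists (arcs g)" for p
  proof -
    have "sum_list (map (cob r i k) c) = 1"
      unfolding c_def using i_j j_k k_l l_less cob_uminus[OF r_k]
      by (simp add: sum_list_map_inv_word cob_prefix_sum)
    then show ?thesis
      using potential_along_walk[OF potential that c] by simp
  qed
  ultimately have zero_on_cover: "G (vtx g r h) = 0" if "h \<in> lists (arcs g)" for h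
    using translation_invariant_finite_support_zero[OF \<open>finite {v. G v \<noteq> 0}\<close> c that] by blast
  show "F1 v = F2 v"
  proof (cases "v \<in> cover_vertices g r")
    case True
    then obtain h where "h \<in> lists (arcs g)" "v = vtx g r h"
      unfolding cover_vertices_def by blast
    with zero_on_cover show ?thesis
      unfolding G_def by simp
  next
    case False
    with assms show ?thesis
      unfolding fills_def by simp
  qed
qed

lemma area_eq_chain_sum:
  assumes "fills g r w0 es F"
  shows "area g r w0 es = chain_sum F"
  unfolding area_def chain_sum_def[symmetric]
  using assms fills_unique by (intro the_equality) blast+

lemma balanced_filling_step:
  assumes "(x, y) \<in> word_step g r" "w0 \<in> lists (arcs g)"
  shows "\<exists>F. fills_between g r w0 x y F \<and>
    chain_sum F = trapezoid_sum g r \<alpha> \<eta> w0 x - trapezoid_sum g r \<alpha> \<eta> w0 y"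
  using assms(1) unfolding word_step_def
proof (elim UnE CollectE exE conjE)
  fix xs ys a
  assume xy: "(x, y) = (xs @ [a, - a] @ ys, xs @ ys)"
    and xs: "xs \<in> lists (arcs g)" and ys: "ys \<in> lists (arcs g)" and a: "a \<in> arcs g"
  have u: "w0 @ xs \<in> lists (arcs g)"
    using assms(2) xs by simp
  have loop: "vtx g r (w0 @ xs @ [a, - a]) = vtx g r (w0 @ xs)"
    using word_eq_cancel[OF u a, of r] by (simp add: vtx_eq_iff)
  have "fills_between g r w0 (xs @ [a, - a] @ ys) (xs @ ys) (\<lambda>_. 0)"
    by (rule fills_between_insert_loop[OF loop ys fills_between_backtrack[OF u a]])
  moreover have "trapezoid_sum g r \<alpha> \<eta> w0 (xs @ [a, - a] @ ys) = trapezoid_sum g r \<alpha> \<eta> w0 (xs @ ys)"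
    using trapezoid_sum_insert_loop[OF loop ys]
      trapezoid_sum_backtrack[where \<eta> = "cob r j l", OF \<eta>_uminus u a] by simp
  ultimately show ?thesis
    using xy by (intro exI[of _ "\<lambda>_. 0"]) simp
next
  fix xs ys
  assume xy: "(x, y) = (xs @ r @ ys, xs @ ys)"
    and xs: "xs \<in> lists (arcs g)" and ys: "ys \<in> lists (arcs g)"
  have u: "w0 @ xs \<in> lists (arcs g)"
    using assms(2) xs by simp
  have loop: "vtx g r (w0 @ xs @ r) = vtx g r (w0 @ xs)"
    using word_eq_relator[OF u r_in_lists] by (simp add: vtx_eq_iff)
  define F :: "int list set \<Rightarrow> int" where "F v = of_bool (v = vtx g r (w0 @ xs))" for v
  have "fills_between g r w0 (xs @ r @ ys) (xs @ ys) F"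
    unfolding F_def by (rule fills_between_insert_loop[OF loop ys fills_between_face[OF u]])
  moreover have "chain_sum F = trapezoid_sum g r \<alpha> \<eta> (w0 @ xs) r"
    unfolding chain_sum_def F_def trapezoid_sum_face[OF u] by simp
  ultimately show ?thesis
    using xy trapezoid_sum_insert_loop[OF loop ys] by auto
qed

lemma balanced_filling_exists:
  assumes "(x, y) \<in> word_eq g r" "w0 \<in> lists (arcs g)"
  shows "\<exists>F. fills_between g r w0 x y F \<and>
    chain_sum F = trapezoid_sum g r \<alpha> \<eta> w0 x - trapezoid_sum g r \<alpha> \<eta> w0 y"
  using assms(1) unfolding word_eq_def
proof (induction rule: rtrancl_induct)
  case base
  show ?case
    using fills_between_refl by fastforce
next
  case (step y z)
  obtain F1 where F1: "fills_between g r w0 x y F1"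
    "chain_sum F1 = trapezoid_sum g r \<alpha> \<eta> w0 x - trapezoid_sum g r \<alpha> \<eta> w0 y"
    using step.IH by blast
  obtain F2 where F2: "fills_between g r w0 y z F2"
    "chain_sum F2 = trapezoid_sum g r \<alpha> \<eta> w0 y - trapezoid_sum g r \<alpha> \<eta> w0 z"
    using step.hyps(2)
  proof
    assume "(y, z) \<in> word_step g r"
    then show thesis
      using balanced_filling_step[OF _ assms(2)] that by blast
  next
    assume "(y, z) \<in> (word_step g r)\<inverse>"
    then obtain F where "fills_between g r w0 z y F"
      "chain_sum F = trapezoid_sum g r \<alpha> \<eta> w0 z - trapezoid_sum g r \<alpha> \<eta> w0 y"
      using balanced_filling_step[OF _ assms(2)] by blast
    then show thesis
      using that[OF fills_between_sym] by (simp add: chain_sum_uminus)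
  qed
  have "chain_sum (\<lambda>v. F1 v + F2 v) = chain_sum F1 + chain_sum F2"
    using F1(1) F2(1) unfolding fills_between_def finite_chain_def by (intro chain_sum_add) auto
  then show ?case
    using fills_between_trans[OF F1(1) F2(1)] F1(2) F2(2) by fastforce
qed

end

theorem proposition5p4:
  fixes g :: nat and r :: "int list" and i j k l :: nat
    and \<alpha> :: "int list set \<Rightarrow> real" and w0 es :: "int list"
  assumes "g \<ge> 2"
    and "one_vertex_one_face g r"
    and "i < j" and "j < k" and "k < l" and "l < 4 * g"
    and "r ! k = - (r ! i)" and "r ! l = - (r ! j)"
    and "derives_from g r (cob r i k) \<alpha>"
    and "closed_walk g r w0 es"
  shows "area g r w0 es =
    (\<Sum>m < length es. (\<alpha> (vtx g r (w0 @ take m es)) + \<alpha> (vtx g r (w0 @ take (Suc m) es))) / 2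
                      * cob r j l (es ! m))"
proof -
  interpret interlaced_cobounds g r i j k l \<alpha>
    using assms unfolding one_vertex_one_face_def by unfold_locales auto
  have "w0 \<in> lists (arcs g)"
    using assms(10) unfolding closed_walk_def by simp
  then obtain F where "fills_between g r w0 es [] F"
    and "chain_sum F = trapezoid_sum g r \<alpha> \<eta> w0 es - trapezoid_sum g r \<alpha> \<eta> w0 []"
    using balanced_filling_exists[OF closed_walk_word_eq_Nil[OF assms(10)]] by blast
  then have "area g r w0 es = trapezoid_sum g r \<alpha> \<eta> w0 es"
    using area_eq_chain_sum fills_iff_fills_between_Nil by (simp add: trapezoid_sum_def)
  then show ?thesis
    unfolding trapezoid_sum_def walk_sum_conv_sum .
qed

end
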